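(* For any Lip-von Neumann algebras $(M_1,L_1)$, $(M_2,L_2)$, $(M_3,L_3)$, $$\mathrm{dist}_{qGH^*}(M_1,M_3)\le \mathrm{dist}_{qGH^*}(M_1,M_2)+\mathrm{dist}_{qGH^*}(M_2,M_3).$$
   Context: A Lip-von Neumann algebra (LvNA) is a pair $(M,L_M)$ where $M$ is a von Neumann algebra and $L_M$ is a norm on $M$ (everywhere finite) inducing the $w^*$-topology on bounded subsets of $M$ (equivalently, the closed unit ball $M_1=\{x\in M:\|x\|\le 1\}$ is compact in the $L_M$-topology). $L_M$ is extended to $\mathcal M_2(M)$ ($2\times2$ matrices over $M$) by $L_M((a_{ij}))=\max_{i,j}L_M(a_{ij})$. For LvNAs $(M,L_M)$, $(N,L_N)$, $\mathcal L(M,N)$ is the set of seminorms $L$ on $M\oplus N$ with $L(x,0)=L_M(x)$ and $L(0,y)=L_N(y)$ for all $x\in M,y\in N$; each such $L$ is extended to $\mathcal M_2(M)\oplus\mathcal M_2(N)\cong\mathcal M_2(M\oplus N)$ by entrywise maximum. $X_M=\{x\in\mathcal M_2(M): x\ge 0,\ \|x\|\le 1\}$, and similarly $X_N$. For $L\in\mathcal L(M,N)$, $\mathrm{dist}^L_H(X_M,X_N)=\max\big(\sup_{x\in X_M}\inf_{y\in X_N}L(x,-y),\ \sup_{y\in X_N}\inf_{x\in X_M}L(x,-y)\big)$, and the dual quantum Gromov–Hausdorff distance is $\mathrm{dist}_{qGH^*}(M,N)=\inf_{L\in\mathcal L(M,N)}\mathrm{dist}^L_H(X_M,X_N)$. 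*)

theory Defs
  imports Complex_Main "HOL-Library.Extended_Real"
begin

class hs_hilbert = ab_group_add +
  fixes hs_scale :: "complex \<Rightarrow> 'a \<Rightarrow> 'a"
    and hs_inner :: "'a \<Rightarrow> 'a \<Rightarrow> complex"
  assumes hs_scale_add_right: "hs_scale a (x + y) = hs_scale a x + hs_scale a y"
    and hs_scale_add_left: "hs_scale (a + b) x = hs_scale a x + hs_scale b x"
    and hs_scale_scale: "hs_scale a (hs_scale b x) = hs_scale (a * b) x"
    and hs_scale_one: "hs_scale 1 x = x"
    and hs_inner_add_left: "hs_inner (x + y) z = hs_inner x z + hs_inner y z"
    and hs_inner_scale_left: "hs_inner (hs_scale c x) y = c * hs_inner x y"
    and hs_inner_commute: "hs_inner y x = cnj (hs_inner x y)"
    and hs_inner_nonneg: "Im (hs_inner x x) = 0 \<and> Re (hs_inner x x) \<ge> 0"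
    and hs_inner_definite: "hs_inner x x = 0 \<Longrightarrow> x = 0"
    and hs_complete:
      "(\<forall>e>0. \<exists>N. \<forall>m\<ge>N. \<forall>n\<ge>N. sqrt (Re (hs_inner ((X::nat \<Rightarrow> 'a) m - X n) (X m - X n))) < e)
        \<Longrightarrow> (\<exists>l. \<forall>e>0. \<exists>N. \<forall>n\<ge>N. sqrt (Re (hs_inner (X n - l) (X n - l))) < e)"

definition hs_norm :: "'a::hs_hilbert \<Rightarrow> real" where
  "hs_norm x = sqrt (Re (hs_inner x x))"

definition op_add :: "('a::hs_hilbert \<Rightarrow> 'a) \<Rightarrow> ('a \<Rightarrow> 'a) \<Rightarrow> ('a \<Rightarrow> 'a)" where
  "op_add A B = (\<lambda>\<xi>. A \<xi> + B \<xi>)"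

definition op_diff :: "('a::hs_hilbert \<Rightarrow> 'a) \<Rightarrow> ('a \<Rightarrow> 'a) \<Rightarrow> ('a \<Rightarrow> 'a)" where
  "op_diff A B = (\<lambda>\<xi>. A \<xi> - B \<xi>)"

definition op_neg :: "('a::hs_hilbert \<Rightarrow> 'a) \<Rightarrow> ('a \<Rightarrow> 'a)" where
  "op_neg A = (\<lambda>\<xi>. - A \<xi>)"

definition op_scale :: "complex \<Rightarrow> ('a::hs_hilbert \<Rightarrow> 'a) \<Rightarrow> ('a \<Rightarrow> 'a)" where
  "op_scale c A = (\<lambda>\<xi>. hs_scale c (A \<xi>))"

definition op_zero :: "'a::hs_hilbert \<Rightarrow> 'a" where
  "op_zero = (\<lambda>\<xi>. 0)"

definition bounded_op :: "('a::hs_hilbert \<Rightarrow> 'a) \<Rightarrow> bool" where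
  "bounded_op A \<longleftrightarrow>
     (\<forall>x y. A (x + y) = A x + A y) \<and> (\<forall>c x. A (hs_scale c x) = hs_scale c (A x)) \<and>
     (\<exists>K. \<forall>x. hs_norm (A x) \<le> K * hs_norm x)"

definition commutant :: "('a::hs_hilbert \<Rightarrow> 'a) set \<Rightarrow> ('a \<Rightarrow> 'a) set" where
  "commutant S = {B. bounded_op B \<and> (\<forall>A\<in>S. B \<circ> A = A \<circ> B)}"

definition von_neumann_algebra :: "('a::hs_hilbert \<Rightarrow> 'a) set \<Rightarrow> bool" where
  "von_neumann_algebra M \<longleftrightarrow>
     (\<forall>A\<in>M. bounded_op A) \<and>
     (\<forall>A\<in>M. \<exists>B\<in>M. \<forall>x y. hs_inner (A x) y = hs_inner x (B y)) \<and>
     M = commutant (commutant M)"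

definition op_bounded_set :: "('a::hs_hilbert \<Rightarrow> 'a) set \<Rightarrow> bool" where
  "op_bounded_set S \<longleftrightarrow> (\<exists>r. \<forall>A\<in>S. \<forall>\<xi>. hs_norm (A \<xi>) \<le> r * hs_norm \<xi>)"

text \<open>Normal (sigma-weakly continuous) functionals
  A \<mapsto> \<Sum>n. <A \<xi>_n, \<eta>_n> with square-summable sequences.\<close>
definition sq_summable :: "(nat \<Rightarrow> 'a::hs_hilbert) \<Rightarrow> bool" where
  "sq_summable \<xi> \<longleftrightarrow> summable (\<lambda>n. (hs_norm (\<xi> n))\<^sup>2)"

definition normal_fun :: "(nat \<Rightarrow> 'a::hs_hilbert) \<Rightarrow> (nat \<Rightarrow> 'a) \<Rightarrow> ('a \<Rightarrow> 'a) \<Rightarrow> complex" where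
  "normal_fun \<xi> \<eta> A = (\<Sum>n. hs_inner (A (\<xi> n)) (\<eta> n))"

definition wstar_open_in :: "('a::hs_hilbert \<Rightarrow> 'a) set \<Rightarrow> ('a \<Rightarrow> 'a) set \<Rightarrow> bool" where
  "wstar_open_in S U \<longleftrightarrow> U \<subseteq> S \<and>
     (\<forall>A\<in>U. \<exists>F e. finite F \<and> e > 0 \<and>
        (\<forall>(\<xi>, \<eta>)\<in>F. sq_summable \<xi> \<and> sq_summable \<eta>) \<and>
        (\<forall>B\<in>S. (\<forall>(\<xi>, \<eta>)\<in>F. cmod (normal_fun \<xi> \<eta> (op_diff B A)) < e) \<longrightarrow> B \<in> U))"

definition norm_open_in :: "(('a::hs_hilbert \<Rightarrow> 'a) \<Rightarrow> real) \<Rightarrow> ('a \<Rightarrow> 'a) set \<Rightarrow> ('a \<Rightarrow> 'a) set \<Rightarrow> bool" where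
  "norm_open_in L S U \<longleftrightarrow> U \<subseteq> S \<and>
     (\<forall>A\<in>U. \<exists>e>0. \<forall>B\<in>S. L (op_diff B A) < e \<longrightarrow> B \<in> U)"

definition is_norm_on :: "('a::hs_hilbert \<Rightarrow> 'a) set \<Rightarrow> (('a \<Rightarrow> 'a) \<Rightarrow> real) \<Rightarrow> bool" where
  "is_norm_on M L \<longleftrightarrow>
     (\<forall>A\<in>M. \<forall>B\<in>M. L (op_add A B) \<le> L A + L B) \<and>
     (\<forall>c. \<forall>A\<in>M. L (op_scale c A) = cmod c * L A) \<and>
     (\<forall>A\<in>M. L A = 0 \<longleftrightarrow> A = op_zero)"

definition LvNA :: "('a::hs_hilbert \<Rightarrow> 'a) set \<Rightarrow> (('a \<Rightarrow> 'a) \<Rightarrow> real) \<Rightarrow> bool" where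
  "LvNA M L \<longleftrightarrow> von_neumann_algebra M \<and> is_norm_on M L \<and>
     (\<forall>S. S \<subseteq> M \<and> op_bounded_set S \<longrightarrow>
        (\<forall>U. norm_open_in L S U \<longleftrightarrow> wstar_open_in S U))"

type_synonym 'a mat2 = "bool \<Rightarrow> bool \<Rightarrow> ('a \<Rightarrow> 'a)"

definition mat_pos :: "'a::hs_hilbert mat2 \<Rightarrow> bool" where
  "mat_pos x \<longleftrightarrow> (\<forall>\<xi>::bool \<Rightarrow> 'a.
     Im (\<Sum>i\<in>UNIV. \<Sum>j\<in>UNIV. hs_inner (x i j (\<xi> j)) (\<xi> i)) = 0 \<and>
     Re (\<Sum>i\<in>UNIV. \<Sum>j\<in>UNIV. hs_inner (x i j (\<xi> j)) (\<xi> i)) \<ge> 0)"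

definition mat_contr :: "'a::hs_hilbert mat2 \<Rightarrow> bool" where
  "mat_contr x \<longleftrightarrow> (\<forall>\<xi>::bool \<Rightarrow> 'a.
     (\<Sum>i\<in>UNIV. (hs_norm (\<Sum>j\<in>UNIV. x i j (\<xi> j)))\<^sup>2) \<le> (\<Sum>j\<in>UNIV. (hs_norm (\<xi> j))\<^sup>2))"

definition XM :: "('a::hs_hilbert \<Rightarrow> 'a) set \<Rightarrow> 'a mat2 set" where
  "XM M = {x. (\<forall>i j. x i j \<in> M) \<and> mat_pos x \<and> mat_contr x}"

definition mat_neg :: "'a::hs_hilbert mat2 \<Rightarrow> 'a mat2" where
  "mat_neg y = (\<lambda>i j. op_neg (y i j))"

definition Lset :: "('a::hs_hilbert \<Rightarrow> 'a) set \<Rightarrow> (('a \<Rightarrow> 'a) \<Rightarrow> real)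
    \<Rightarrow> ('b::hs_hilbert \<Rightarrow> 'b) set \<Rightarrow> (('b \<Rightarrow> 'b) \<Rightarrow> real)
    \<Rightarrow> ((('a \<Rightarrow> 'a) \<times> ('b \<Rightarrow> 'b)) \<Rightarrow> real) set" where
  "Lset M LM N LN = {L.
     (\<forall>p\<in>M \<times> N. \<forall>q\<in>M \<times> N.
        L (op_add (fst p) (fst q), op_add (snd p) (snd q)) \<le> L p + L q) \<and>
     (\<forall>c. \<forall>p\<in>M \<times> N. L (op_scale c (fst p), op_scale c (snd p)) = cmod c * L p) \<and>
     (\<forall>x\<in>M. L (x, op_zero) = LM x) \<and>
     (\<forall>y\<in>N. L (op_zero, y) = LN y)}"

definition Lmat :: "((('a::hs_hilbert \<Rightarrow> 'a) \<times> ('b::hs_hilbert \<Rightarrow> 'b)) \<Rightarrow> real)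
    \<Rightarrow> 'a mat2 \<Rightarrow> 'b mat2 \<Rightarrow> real" where
  "Lmat L x y = Max {L (x i j, y i j) | i j. True}"

definition distH :: "((('a::hs_hilbert \<Rightarrow> 'a) \<times> ('b::hs_hilbert \<Rightarrow> 'b)) \<Rightarrow> real)
    \<Rightarrow> ('a \<Rightarrow> 'a) set \<Rightarrow> ('b \<Rightarrow> 'b) set \<Rightarrow> ereal" where
  "distH L M N = max
     (SUP x\<in>XM M. INF y\<in>XM N. ereal (Lmat L x (mat_neg y)))
     (SUP y\<in>XM N. INF x\<in>XM M. ereal (Lmat L x (mat_neg y)))"

definition dist_qGH :: "('a::hs_hilbert \<Rightarrow> 'a) set \<Rightarrow> (('a \<Rightarrow> 'a) \<Rightarrow> real)
    \<Rightarrow> ('b::hs_hilbert \<Rightarrow> 'b) set \<Rightarrow> (('b \<Rightarrow> 'b) \<Rightarrow> real) \<Rightarrow> ereal" where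
  "dist_qGH M LM N LN = (INF L\<in>Lset M LM N LN. distH L M N)"

end

theory Submission
  imports Defs
begin

text \<open>Admissible seminorms \<open>L12\<close> on \<open>M1 \<oplus> M2\<close> and \<open>L23\<close> on \<open>M2 \<oplus> M3\<close> are glued
along \<open>M2\<close> to \<open>L13(x, z) = inf {L12(x, -y) + L23(y, z) | y \<in> M2}\<close>. Since \<open>M2\<close> is a linear
space, \<open>L13\<close> is again a seminorm, and the triangle inequalities of \<open>L12\<close> and \<open>L23\<close> through
\<open>(0, y)\<close> show that it restricts to \<open>L1\<close> and \<open>L3\<close>. Entrywise on matrices,
\<open>L13(x, -z) \<le> L12(x, -y) + L23(y, -z)\<close>, so the Hausdorff distance of \<open>X\<^sub>M\<^sub>1\<close> and \<open>X\<^sub>M\<^sub>3\<close>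
for \<open>L13\<close> is at most the sum of the Hausdorff distances through \<open>X\<^sub>M\<^sub>2\<close>; taking infima over
\<open>L12\<close> and \<open>L23\<close> gives the triangle inequality.\<close>

lemma hs_scale_zero_right [simp]: "hs_scale c (0::'a::hs_hilbert) = 0"
  using hs_scale_add_right[of c "0::'a" 0] by simp

lemma hs_scale_zero_left [simp]: "hs_scale 0 (x::'a::hs_hilbert) = 0"
  using hs_scale_add_left[of 0 0 x] by simp

lemma hs_scale_minus_one: "hs_scale (-1) (x::'a::hs_hilbert) = - x"
  using hs_scale_add_left[of 1 "-1" x] by (simp add: hs_scale_one eq_neg_iff_add_eq_0 add.commute)

lemma hs_scale_minus_right: "hs_scale c (- (x::'a::hs_hilbert)) = - hs_scale c x"
  using hs_scale_add_right[of c x "-x"] by (simp add: eq_neg_iff_add_eq_0 add.commute)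

lemma hs_inner_zero_left [simp]: "hs_inner (0::'a::hs_hilbert) y = 0"
  using hs_inner_add_left[of "0::'a" 0 y] by simp

lemma hs_inner_diff_left: "hs_inner ((x::'a::hs_hilbert) - z) y = hs_inner x y - hs_inner z y"
  using hs_inner_add_left[of "x - z" z y] by simp

lemma hs_inner_add_right: "hs_inner (x::'a::hs_hilbert) (y + z) = hs_inner x y + hs_inner x z"
  by (metis complex_cnj_add hs_inner_add_left hs_inner_commute)

lemma hs_inner_diff_right: "hs_inner (x::'a::hs_hilbert) (y - z) = hs_inner x y - hs_inner x z"
  by (metis complex_cnj_diff hs_inner_diff_left hs_inner_commute)

lemma hs_inner_scale_right: "hs_inner (x::'a::hs_hilbert) (hs_scale c y) = cnj c * hs_inner x y"
  by (metis complex_cnj_mult hs_inner_scale_left hs_inner_commute)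

lemma hs_norm_nonneg: "hs_norm (x::'a::hs_hilbert) \<ge> 0"
  unfolding hs_norm_def using hs_inner_nonneg[of x] by simp

lemma hs_norm_power2: "(hs_norm (x::'a::hs_hilbert))\<^sup>2 = Re (hs_inner x x)"
  unfolding hs_norm_def by (meson hs_inner_nonneg real_sqrt_pow2)

lemma hs_norm_scale: "hs_norm (hs_scale c (x::'a::hs_hilbert)) = cmod c * hs_norm x"
proof -
  have "hs_inner (hs_scale c x) (hs_scale c x) = c * cnj c * hs_inner x x"
    by (simp add: hs_inner_scale_left hs_inner_scale_right)
  also have "c * cnj c = complex_of_real ((cmod c)\<^sup>2)"
    by (simp add: complex_norm_square[symmetric])
  finally have "Re (hs_inner (hs_scale c x) (hs_scale c x)) = (cmod c)\<^sup>2 * Re (hs_inner x x)"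
    by simp
  then show ?thesis unfolding hs_norm_def by (simp add: real_sqrt_mult)
qed

lemma hs_norm_add_power2_le:
  "(hs_norm ((x::'a::hs_hilbert) + y))\<^sup>2 \<le> 2 * (hs_norm x)\<^sup>2 + 2 * (hs_norm y)\<^sup>2"
proof -
  have "Re (hs_inner (x + y) (x + y)) + Re (hs_inner (x - y) (x - y))
      = 2 * Re (hs_inner x x) + 2 * Re (hs_inner y y)"
    by (simp add: hs_inner_add_left hs_inner_add_right hs_inner_diff_left hs_inner_diff_right)
  moreover have "Re (hs_inner (x - y) (x - y)) \<ge> 0" using hs_inner_nonneg by blast
  ultimately show ?thesis unfolding hs_norm_power2 by linarith
qed

definition op_subspace :: "('a::hs_hilbert \<Rightarrow> 'a) set \<Rightarrow> bool" where
  "op_subspace M \<longleftrightarrow> op_zero \<in> M \<and> (\<forall>A\<in>M. \<forall>B\<in>M. op_add A B \<in> M) \<and> (\<forall>c. \<forall>A\<in>M. op_scale c A \<in> M)"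

lemma op_neg_eq_scale: "op_neg A = op_scale (-1) (A::'a::hs_hilbert \<Rightarrow> 'a)"
  by (simp add: op_neg_def op_scale_def hs_scale_minus_one)

lemma op_subspace_zero: "op_subspace M \<Longrightarrow> op_zero \<in> M"
  and op_subspace_add: "op_subspace M \<Longrightarrow> A \<in> M \<Longrightarrow> B \<in> M \<Longrightarrow> op_add A B \<in> M"
  and op_subspace_scale: "op_subspace M \<Longrightarrow> A \<in> M \<Longrightarrow> op_scale c A \<in> M"
  and op_subspace_neg: "op_subspace M \<Longrightarrow> A \<in> M \<Longrightarrow> op_neg A \<in> M"
  unfolding op_subspace_def op_neg_eq_scale by blast+

lemma op_add_zero_right [simp]: "op_add A op_zero = A"
  and op_add_zero_left [simp]: "op_add op_zero A = A"
  and op_add_neg_left [simp]: "op_add (op_neg A) A = op_zero"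
  and op_neg_zero [simp]: "op_neg op_zero = (op_zero :: 'a::hs_hilbert \<Rightarrow> 'a)"
  and op_scale_zero [simp]: "op_scale 0 A = op_zero"
  and op_neg_add: "op_neg (op_add A B) = op_add (op_neg A) (op_neg B)"
  and op_neg_scale: "op_neg (op_scale c A) = op_scale c (op_neg A)"
  and op_scale_inverse: "c \<noteq> 0 \<Longrightarrow> op_scale (inverse c) (op_scale c A) = A"
  by (auto simp: op_add_def op_zero_def op_neg_def op_scale_def fun_eq_iff hs_scale_minus_right
      hs_scale_scale hs_scale_one)

lemma bounded_op_zero: "bounded_op (op_zero :: 'a::hs_hilbert \<Rightarrow> 'a)"
  unfolding bounded_op_def op_zero_def by (auto intro!: exI[of _ 0] simp: hs_norm_def)

lemma bounded_op_add:
  assumes "bounded_op A" "bounded_op (B::'a::hs_hilbert \<Rightarrow> 'a)"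
  shows "bounded_op (op_add A B)"
proof -
  from assms obtain K1 K2 where K1: "\<And>x. hs_norm (A x) \<le> K1 * hs_norm x"
    and K2: "\<And>x. hs_norm (B x) \<le> K2 * hs_norm x" unfolding bounded_op_def by blast
  define K where "K = sqrt (2 * K1\<^sup>2 + 2 * K2\<^sup>2)"
  have "hs_norm (A x + B x) \<le> K * hs_norm x" for x
  proof -
    have "(hs_norm (A x))\<^sup>2 \<le> (K1 * hs_norm x)\<^sup>2" "(hs_norm (B x))\<^sup>2 \<le> (K2 * hs_norm x)\<^sup>2"
      using K1[of x] K2[of x] hs_norm_nonneg by (auto intro!: power_mono)
    then have "(hs_norm (A x + B x))\<^sup>2 \<le> (K * hs_norm x)\<^sup>2"
      using hs_norm_add_power2_le[of "A x" "B x"]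
      by (simp add: K_def power_mult_distrib algebra_simps)
    then show ?thesis
      using hs_norm_nonneg[of x] by (simp add: K_def power2_le_iff_abs_le)
  qed
  then show ?thesis using assms unfolding bounded_op_def op_add_def
    by (auto simp: hs_scale_add_right algebra_simps)
qed

lemma bounded_op_scale:
  assumes "bounded_op (A::'a::hs_hilbert \<Rightarrow> 'a)"
  shows "bounded_op (op_scale c A)"
proof -
  from assms obtain K where K: "\<And>x. hs_norm (A x) \<le> K * hs_norm x" unfolding bounded_op_def by blast
  have "hs_norm (hs_scale c (A x)) \<le> (cmod c * K) * hs_norm x" for x
    using K[of x] by (simp add: hs_norm_scale mult_left_mono mult.assoc)
  then show ?thesis using assms unfolding bounded_op_def op_scale_def
    by (auto simp: hs_scale_add_right hs_scale_scale mult.commute intro!: exI[of _ "cmod c * K"])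
qed

lemma op_subspace_commutant:
  assumes "\<forall>C\<in>S. bounded_op C"
  shows "op_subspace (commutant (S::('a::hs_hilbert \<Rightarrow> 'a) set))"
proof -
  have linear: "C (x + y) = C x + C y" "C (hs_scale c x) = hs_scale c (C x)" if "C \<in> S" for C x y c
    using assms that unfolding bounded_op_def by auto
  then have "C 0 = 0" if "C \<in> S" for C
    using that by (metis add_cancel_right_right)
  then show ?thesis
    unfolding op_subspace_def commutant_def
    using bounded_op_zero bounded_op_add bounded_op_scale linear
    by (auto simp: op_zero_def op_add_def op_scale_def fun_eq_iff)
qed

lemma von_neumann_algebra_op_subspace:
  assumes "von_neumann_algebra M"
  shows "op_subspace M"
proof -
  have "op_subspace (commutant (commutant M))"
    by (rule op_subspace_commutant) (simp add: commutant_def)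
  then show ?thesis using assms unfolding von_neumann_algebra_def by simp
qed

section \<open>Admissible seminorms and their composition\<close>

lemma Lset_add:
  assumes "L \<in> Lset M LM N LN" "x \<in> M" "x' \<in> M" "y \<in> N" "y' \<in> N"
  shows "L (op_add x x', op_add y y') \<le> L (x, y) + L (x', y')"
proof -
  have "\<forall>p\<in>M \<times> N. \<forall>q\<in>M \<times> N. L (op_add (fst p) (fst q), op_add (snd p) (snd q)) \<le> L p + L q"
    using assms(1) unfolding Lset_def by blast
  then show ?thesis using assms(2-5) by fastforce
qed

lemma Lset_scale:
  assumes "L \<in> Lset M LM N LN" "x \<in> M" "y \<in> N"
  shows "L (op_scale c x, op_scale c y) = cmod c * L (x, y)"
proof -
  have "\<forall>p\<in>M \<times> N. L (op_scale c (fst p), op_scale c (snd p)) = cmod c * L p"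
    using assms(1) unfolding Lset_def by blast
  then show ?thesis using assms(2,3) by fastforce
qed

lemma Lset_left: "L \<in> Lset M LM N LN \<Longrightarrow> x \<in> M \<Longrightarrow> L (x, op_zero) = LM x"
  and Lset_right: "L \<in> Lset M LM N LN \<Longrightarrow> y \<in> N \<Longrightarrow> L (op_zero, y) = LN y"
  unfolding Lset_def by blast+

lemma Lset_zero:
  assumes "L \<in> Lset M LM N LN" "op_subspace M" "op_subspace N"
  shows "L (op_zero, op_zero) = 0"
  using Lset_scale[OF assms(1) op_subspace_zero[OF assms(2)] op_subspace_zero[OF assms(3)], of 0]
  by simp

lemma Lset_nonneg:
  assumes L: "L \<in> Lset M LM N LN" and M: "op_subspace M" and N: "op_subspace N"
    and x: "x \<in> M" and y: "y \<in> N"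
  shows "0 \<le> L (x, y)"
proof -
  have "L (op_neg x, op_neg y) = L (x, y)"
    using Lset_scale[OF L x y, of "-1"] by (simp add: op_neg_eq_scale)
  moreover have "L (op_add (op_neg x) x, op_add (op_neg y) y) \<le> L (op_neg x, op_neg y) + L (x, y)"
    using Lset_add[OF L op_subspace_neg[OF M x] x op_subspace_neg[OF N y] y] .
  ultimately show ?thesis using Lset_zero[OF L M N] by simp
qed

text \<open>A conditionally complete infimum of reals: it is the intended one because \<open>M2 \<noteq> {}\<close>
and all terms are nonnegative.\<close>
definition comp_seminorm ::
    "((('a::hs_hilbert \<Rightarrow> 'a) \<times> ('b::hs_hilbert \<Rightarrow> 'b)) \<Rightarrow> real)
     \<Rightarrow> ((('b \<Rightarrow> 'b) \<times> ('c::hs_hilbert \<Rightarrow> 'c)) \<Rightarrow> real) \<Rightarrow> ('b \<Rightarrow> 'b) set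
     \<Rightarrow> (('a \<Rightarrow> 'a) \<times> ('c \<Rightarrow> 'c)) \<Rightarrow> real" where
  "comp_seminorm L12 L23 M2 p = (INF y\<in>M2. L12 (fst p, op_neg y) + L23 (y, snd p))"

context
  fixes M1 :: "('a::hs_hilbert \<Rightarrow> 'a) set" and L1 :: "('a \<Rightarrow> 'a) \<Rightarrow> real"
    and M2 :: "('b::hs_hilbert \<Rightarrow> 'b) set" and L2 :: "('b \<Rightarrow> 'b) \<Rightarrow> real"
    and M3 :: "('c::hs_hilbert \<Rightarrow> 'c) set" and L3 :: "('c \<Rightarrow> 'c) \<Rightarrow> real"
    and L12 L23
  assumes M1: "op_subspace M1" and M2: "op_subspace M2" and M3: "op_subspace M3"
    and L12: "L12 \<in> Lset M1 L1 M2 L2" and L23: "L23 \<in> Lset M2 L2 M3 L3"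
begin

private abbreviation "L13 \<equiv> comp_seminorm L12 L23 M2"

lemma comp_seminorm_le:
  assumes "x \<in> M1" "y \<in> M2" "z \<in> M3"
  shows "L13 (x, z) \<le> L12 (x, op_neg y) + L23 (y, z)"
  unfolding comp_seminorm_def fst_conv snd_conv
proof (rule cINF_lower)
  show "bdd_below ((\<lambda>y. L12 (x, op_neg y) + L23 (y, z)) ` M2)"
    using assms Lset_nonneg[OF L12 M1 M2] Lset_nonneg[OF L23 M2 M3] op_subspace_neg[OF M2]
    by (intro bdd_belowI2[of _ 0]) (simp add: add_nonneg_nonneg)
qed (use assms in auto)

private lemma comp_seminorm_greatest:
  assumes "\<And>y. y \<in> M2 \<Longrightarrow> r \<le> L12 (x, op_neg y) + L23 (y, z)"
  shows "r \<le> L13 (x, z)"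
  unfolding comp_seminorm_def fst_conv snd_conv
  using op_subspace_zero[OF M2] assms by (intro cINF_greatest) auto

private lemma comp_seminorm_left:
  assumes x: "x \<in> M1"
  shows "L13 (x, op_zero) = L1 x"
proof (rule antisym)
  show "L13 (x, op_zero) \<le> L1 x"
    using comp_seminorm_le[OF x op_subspace_zero[OF M2] op_subspace_zero[OF M3]]
      Lset_zero[OF L23 M2 M3] Lset_left[OF L12 x] by simp
  show "L1 x \<le> L13 (x, op_zero)"
  proof (rule comp_seminorm_greatest)
    fix y assume y: "y \<in> M2"
    have "L12 (op_add x op_zero, op_add (op_neg y) y) \<le> L12 (x, op_neg y) + L12 (op_zero, y)"
      using Lset_add[OF L12] x y op_subspace_zero[OF M1] op_subspace_neg[OF M2] by blast
    then show "L1 x \<le> L12 (x, op_neg y) + L23 (y, op_zero)"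
      using Lset_left[OF L12 x] Lset_right[OF L12 y] Lset_left[OF L23 y] by simp
  qed
qed

private lemma comp_seminorm_right:
  assumes z: "z \<in> M3"
  shows "L13 (op_zero, z) = L3 z"
proof (rule antisym)
  show "L13 (op_zero, z) \<le> L3 z"
    using comp_seminorm_le[OF op_subspace_zero[OF M1] op_subspace_zero[OF M2] z]
      Lset_zero[OF L12 M1 M2] Lset_right[OF L23 z] by simp
  show "L3 z \<le> L13 (op_zero, z)"
  proof (rule comp_seminorm_greatest)
    fix y assume y: "y \<in> M2"
    have "L23 (op_add (op_neg y) y, op_add op_zero z) \<le> L23 (op_neg y, op_zero) + L23 (y, z)"
      using Lset_add[OF L23] z y op_subspace_zero[OF M3] op_subspace_neg[OF M2] by blast
    then show "L3 z \<le> L12 (op_zero, op_neg y) + L23 (y, z)"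
      using Lset_right[OF L23 z] Lset_right[OF L12] Lset_left[OF L23] op_subspace_neg[OF M2 y] by simp
  qed
qed

private lemma comp_seminorm_add_greatest:
  assumes "\<And>y y'. y \<in> M2 \<Longrightarrow> y' \<in> M2 \<Longrightarrow>
    r \<le> (L12 (x, op_neg y) + L23 (y, z)) + (L12 (x', op_neg y') + L23 (y', z'))"
  shows "r \<le> L13 (x, z) + L13 (x', z')"
proof -
  have "r - (L12 (x', op_neg y') + L23 (y', z')) \<le> L13 (x, z)" if "y' \<in> M2" for y'
    using assms that by (intro comp_seminorm_greatest) (simp add: algebra_simps)
  then have "r - L13 (x, z) \<le> L13 (x', z')"
    by (intro comp_seminorm_greatest) (simp add: algebra_simps)
  then show ?thesis by simp
qed

private lemma comp_seminorm_add:
  assumes x: "x \<in> M1" "x' \<in> M1" and z: "z \<in> M3" "z' \<in> M3"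
  shows "L13 (op_add x x', op_add z z') \<le> L13 (x, z) + L13 (x', z')"
proof (rule comp_seminorm_add_greatest)
  fix y y' assume y: "y \<in> M2" "y' \<in> M2"
  have "L13 (op_add x x', op_add z z')
      \<le> L12 (op_add x x', op_add (op_neg y) (op_neg y')) + L23 (op_add y y', op_add z z')"
    using comp_seminorm_le[OF op_subspace_add[OF M1 x] op_subspace_add[OF M2 y]
        op_subspace_add[OF M3 z]]
    by (simp add: op_neg_add)
  also have "\<dots> \<le> (L12 (x, op_neg y) + L12 (x', op_neg y')) + (L23 (y, z) + L23 (y', z'))"
    using Lset_add[OF L12 x op_subspace_neg[OF M2 y(1)] op_subspace_neg[OF M2 y(2)]]
      Lset_add[OF L23 y z] by (rule add_mono)
  finally show "L13 (op_add x x', op_add z z')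
      \<le> (L12 (x, op_neg y) + L23 (y, z)) + (L12 (x', op_neg y') + L23 (y', z'))"
    by simp
qed

private lemma comp_seminorm_scale_le:
  assumes c: "c \<noteq> 0" and x: "x \<in> M1" and z: "z \<in> M3"
  shows "L13 (op_scale c x, op_scale c z) \<le> cmod c * L13 (x, z)"
proof -
  have "L13 (op_scale c x, op_scale c z) / cmod c \<le> L13 (x, z)"
  proof (rule comp_seminorm_greatest)
    fix y assume y: "y \<in> M2"
    have "L13 (op_scale c x, op_scale c z)
        \<le> L12 (op_scale c x, op_scale c (op_neg y)) + L23 (op_scale c y, op_scale c z)"
      using comp_seminorm_le[OF op_subspace_scale[OF M1 x] op_subspace_scale[OF M2 y]
          op_subspace_scale[OF M3 z]]
      by (simp add: op_neg_scale)
    also have "\<dots> = cmod c * (L12 (x, op_neg y) + L23 (y, z))"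
      using Lset_scale[OF L12 x op_subspace_neg[OF M2 y]] Lset_scale[OF L23 y z]
      by (simp add: distrib_left)
    finally show "L13 (op_scale c x, op_scale c z) / cmod c \<le> L12 (x, op_neg y) + L23 (y, z)"
      using c by (simp add: divide_le_eq mult.commute)
  qed
  then show ?thesis using c by (simp add: divide_le_eq mult.commute)
qed

private lemma comp_seminorm_scale:
  assumes x: "x \<in> M1" and z: "z \<in> M3"
  shows "L13 (op_scale c x, op_scale c z) = cmod c * L13 (x, z)"
proof (cases "c = 0")
  case True
  have "L13 (op_zero, op_zero) = L3 op_zero"
    by (rule comp_seminorm_right[OF op_subspace_zero[OF M3]])
  also have "\<dots> = 0"
    using Lset_right[OF L23 op_subspace_zero[OF M3]] Lset_zero[OF L23 M2 M3] by simp
  finally show ?thesis using True by simp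
next
  case False
  \<comment> \<open>the reverse inequality is the same estimate for \<open>inverse c\<close> at \<open>(c x, c z)\<close>\<close>
  have "L13 (x, z) \<le> cmod (inverse c) * L13 (op_scale c x, op_scale c z)"
    using comp_seminorm_scale_le[of "inverse c", OF _ op_subspace_scale[OF M1 x, of c]
        op_subspace_scale[OF M3 z, of c]] False
    by (simp add: op_scale_inverse)
  then have "cmod c * L13 (x, z) \<le> L13 (op_scale c x, op_scale c z)"
    using False by (simp add: norm_divide field_simps)
  then show ?thesis using comp_seminorm_scale_le[OF False x z] by linarith
qed

lemma comp_seminorm_Lset: "L13 \<in> Lset M1 L1 M3 L3"
  unfolding Lset_def mem_Collect_eq
proof (intro conjI ballI allI)
  fix p q assume "p \<in> M1 \<times> M3" "q \<in> M1 \<times> M3"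
  then show "L13 (op_add (fst p) (fst q), op_add (snd p) (snd q)) \<le> L13 p + L13 q"
    using comp_seminorm_add[of "fst p" "fst q" "snd p" "snd q"] by (simp add: mem_Times_iff)
next
  fix c p assume "p \<in> M1 \<times> M3"
  then show "L13 (op_scale c (fst p), op_scale c (snd p)) = cmod c * L13 p"
    using comp_seminorm_scale[of "fst p" "snd p" c] by (simp add: mem_Times_iff)
qed (use comp_seminorm_left comp_seminorm_right in auto)

end

section \<open>Hausdorff distance with respect to a real-valued cost\<close>

definition hausdorff_ereal :: "('x \<Rightarrow> 'y \<Rightarrow> real) \<Rightarrow> 'x set \<Rightarrow> 'y set \<Rightarrow> ereal" where
  "hausdorff_ereal d X Y =
     max (SUP x\<in>X. INF y\<in>Y. ereal (d x y)) (SUP y\<in>Y. INF x\<in>X. ereal (d x y))"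

lemma hausdorff_ereal_nonneg:
  assumes "X \<noteq> {}" "\<And>x y. x \<in> X \<Longrightarrow> y \<in> Y \<Longrightarrow> 0 \<le> d x y"
  shows "0 \<le> hausdorff_ereal d X Y"
proof -
  obtain x where x: "x \<in> X" using assms(1) by blast
  have "0 \<le> (INF y\<in>Y. ereal (d x y))" using assms(2) x by (auto intro: INF_greatest)
  also have "\<dots> \<le> (SUP x\<in>X. INF y\<in>Y. ereal (d x y))" using x by (rule SUP_upper)
  finally show ?thesis unfolding hausdorff_ereal_def by (rule max.coboundedI1)
qed

lemma SUP_INF_triangle_ereal:
  fixes dXY :: "'x \<Rightarrow> 'y \<Rightarrow> real" and dYZ :: "'y \<Rightarrow> 'z \<Rightarrow> real" and dXZ :: "'x \<Rightarrow> 'z \<Rightarrow> real"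
  assumes Y: "Y \<noteq> {}" and Z: "Z \<noteq> {}"
    and nonnegXY: "\<And>x y. x \<in> X \<Longrightarrow> y \<in> Y \<Longrightarrow> 0 \<le> dXY x y"
    and nonnegYZ: "\<And>y z. y \<in> Y \<Longrightarrow> z \<in> Z \<Longrightarrow> 0 \<le> dYZ y z"
    and triangle: "\<And>x y z. x \<in> X \<Longrightarrow> y \<in> Y \<Longrightarrow> z \<in> Z \<Longrightarrow> dXZ x z \<le> dXY x y + dYZ y z"
  shows "(SUP x\<in>X. INF z\<in>Z. ereal (dXZ x z))
    \<le> (SUP x\<in>X. INF y\<in>Y. ereal (dXY x y)) + (SUP y\<in>Y. INF z\<in>Z. ereal (dYZ y z))"
    (is "_ \<le> ?A + ?B")
proof (rule SUP_least)
  fix x assume x: "x \<in> X"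
  obtain y0 where y0: "y0 \<in> Y" using Y by blast
  have "0 \<le> (INF z\<in>Z. ereal (dYZ y0 z))" using nonnegYZ y0 by (auto intro: INF_greatest)
  also have "\<dots> \<le> ?B" using y0 by (rule SUP_upper)
  finally have "0 \<le> ?B" .
  have "(INF z\<in>Z. ereal (dXZ x z)) \<le> ereal (dXY x y) + ?B" if y: "y \<in> Y" for y
  proof -
    have "(INF z\<in>Z. ereal (dXZ x z)) \<le> (INF z\<in>Z. ereal (dXY x y) + ereal (dYZ y z))"
      using triangle x y by (intro INF_mono) auto
    also have "\<dots> = ereal (dXY x y) + (INF z\<in>Z. ereal (dYZ y z))"
      using Z nonnegYZ y by (intro INF_ereal_add_right) auto
    also have "\<dots> \<le> ereal (dXY x y) + ?B"
      using y by (intro add_mono order_refl SUP_upper)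
    finally show ?thesis .
  qed
  then have "(INF z\<in>Z. ereal (dXZ x z)) \<le> (INF y\<in>Y. ereal (dXY x y) + ?B)"
    by (intro INF_greatest)
  also have "\<dots> = (INF y\<in>Y. ereal (dXY x y)) + ?B"
    using Y nonnegXY x \<open>0 \<le> ?B\<close> by (intro INF_ereal_add_left) auto
  also have "\<dots> \<le> ?A + ?B"
    using x by (intro add_mono order_refl SUP_upper)
  finally show "(INF z\<in>Z. ereal (dXZ x z)) \<le> ?A + ?B" .
qed

lemma hausdorff_ereal_triangle:
  fixes d12 :: "'x \<Rightarrow> 'y \<Rightarrow> real" and d23 :: "'y \<Rightarrow> 'z \<Rightarrow> real" and d13 :: "'x \<Rightarrow> 'z \<Rightarrow> real"
  assumes "X \<noteq> {}" "Y \<noteq> {}" "Z \<noteq> {}"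
    and "\<And>x y. x \<in> X \<Longrightarrow> y \<in> Y \<Longrightarrow> 0 \<le> d12 x y"
    and "\<And>y z. y \<in> Y \<Longrightarrow> z \<in> Z \<Longrightarrow> 0 \<le> d23 y z"
    and "\<And>x y z. x \<in> X \<Longrightarrow> y \<in> Y \<Longrightarrow> z \<in> Z \<Longrightarrow> d13 x z \<le> d12 x y + d23 y z"
  shows "hausdorff_ereal d13 X Z \<le> hausdorff_ereal d12 X Y + hausdorff_ereal d23 Y Z"
proof -
  have forward: "(SUP x\<in>X. INF z\<in>Z. ereal (d13 x z))
      \<le> (SUP x\<in>X. INF y\<in>Y. ereal (d12 x y)) + (SUP y\<in>Y. INF z\<in>Z. ereal (d23 y z))"
    (is "?P \<le> ?A + ?B")
    using assms by (intro SUP_INF_triangle_ereal)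
  have backward: "(SUP z\<in>Z. INF x\<in>X. ereal (d13 x z))
      \<le> (SUP z\<in>Z. INF y\<in>Y. ereal (d23 y z)) + (SUP y\<in>Y. INF x\<in>X. ereal (d12 x y))"
    (is "?Q \<le> ?B' + ?A'")
    using assms
    by (intro SUP_INF_triangle_ereal[where dXY = "\<lambda>z y. d23 y z" and dYZ = "\<lambda>y x. d12 x y"])
      (auto simp: add.commute)
  have "?P \<le> max ?A ?A' + max ?B ?B'"
    using forward by (rule order_trans) (intro add_mono max.cobounded1)
  moreover have "?Q \<le> max ?A ?A' + max ?B ?B'"
    using backward by (rule order_trans) (subst add.commute, intro add_mono max.cobounded2)
  ultimately show ?thesis unfolding hausdorff_ereal_def by (rule max.boundedI)
qed

lemma le_INF_add_INF_ereal:
  fixes f :: "'a \<Rightarrow> ereal" and g :: "'b \<Rightarrow> ereal"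
  assumes le: "\<And>a b. a \<in> A \<Longrightarrow> b \<in> B \<Longrightarrow> c \<le> f a + g b"
    and f: "\<And>a. a \<in> A \<Longrightarrow> 0 \<le> f a" and g: "\<And>b. b \<in> B \<Longrightarrow> 0 \<le> g b"
  shows "c \<le> (INF a\<in>A. f a) + (INF b\<in>B. g b)"
proof (cases "A = {} \<or> B = {}")
  case True
  have "0 \<le> (INF a\<in>A. f a)" "0 \<le> (INF b\<in>B. g b)" using f g by (auto intro: INF_greatest)
  then show ?thesis using True by (auto simp: top_ereal_def)
next
  case False
  have "0 \<le> (INF b\<in>B. g b)" using g by (auto intro: INF_greatest)
  have "c \<le> f a + (INF b\<in>B. g b)" if a: "a \<in> A" for a
  proof -
    have "c \<le> (INF b\<in>B. f a + g b)" using le a by (auto intro: INF_greatest)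
    also have "\<dots> = f a + (INF b\<in>B. g b)"
      using False f g a by (intro INF_ereal_add_right) auto
    finally show ?thesis .
  qed
  then have "c \<le> (INF a\<in>A. f a + (INF b\<in>B. g b))" by (auto intro: INF_greatest)
  also have "\<dots> = (INF a\<in>A. f a) + (INF b\<in>B. g b)"
    using False f \<open>0 \<le> (INF b\<in>B. g b)\<close> by (intro INF_ereal_add_left) auto
  finally show ?thesis .
qed

lemma Lmat_eq_Max_image: "Lmat L x y = Max ((\<lambda>(i, j). L (x i j, y i j)) ` UNIV)"
  unfolding Lmat_def by (rule arg_cong[where f = Max]) auto

lemma Lmat_ge: "L (x i j, y i j) \<le> Lmat L x y"
  unfolding Lmat_eq_Max_image by (rule Max_ge) auto

lemma Lmat_le: "(\<And>i j. L (x i j, y i j) \<le> r) \<Longrightarrow> Lmat L x y \<le> r"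
  unfolding Lmat_eq_Max_image by (simp add: Max_le_iff)

lemma XM_nonempty: "op_subspace M \<Longrightarrow> XM M \<noteq> {}"
proof -
  assume "op_subspace M"
  then have "(\<lambda>i j. op_zero) \<in> XM M"
    unfolding XM_def mat_pos_def mat_contr_def
    by (simp add: op_subspace_zero) (simp add: op_zero_def hs_norm_def sum_nonneg)
  then show ?thesis by blast
qed

lemma distH_eq_hausdorff_ereal:
  "distH L M N = hausdorff_ereal (\<lambda>x y. Lmat L x (mat_neg y)) (XM M) (XM N)"
  unfolding distH_def hausdorff_ereal_def ..

lemma Lmat_nonneg:
  assumes "L \<in> Lset M LM N LN" "op_subspace M" "op_subspace N" "x \<in> XM M" "y \<in> XM N"
  shows "0 \<le> Lmat L x (mat_neg y)"
proof -
  have "x True True \<in> M" "y True True \<in> N" using assms(4,5) unfolding XM_def by blast+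
  then have "0 \<le> L (x True True, mat_neg y True True)"
    unfolding mat_neg_def by (intro Lset_nonneg[OF assms(1-3)] op_subspace_neg[OF assms(3)])
  also have "\<dots> \<le> Lmat L x (mat_neg y)" by (rule Lmat_ge)
  finally show ?thesis .
qed

lemma distH_nonneg:
  assumes "L \<in> Lset M LM N LN" "op_subspace M" "op_subspace N"
  shows "0 \<le> distH L M N"
  unfolding distH_eq_hausdorff_ereal
  using XM_nonempty[OF assms(2)] Lmat_nonneg[OF assms] by (rule hausdorff_ereal_nonneg)

lemma distH_comp_seminorm_le:
  assumes M1: "op_subspace M1" and M2: "op_subspace M2" and M3: "op_subspace M3"
    and L12: "L12 \<in> Lset M1 L1 M2 L2" and L23: "L23 \<in> Lset M2 L2 M3 L3"
  shows "distH (comp_seminorm L12 L23 M2) M1 M3 \<le> distH L12 M1 M2 + distH L23 M2 M3"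
  unfolding distH_eq_hausdorff_ereal
proof (rule hausdorff_ereal_triangle)
  fix x y z assume x: "x \<in> XM M1" and y: "y \<in> XM M2" and z: "z \<in> XM M3"
  show "Lmat (comp_seminorm L12 L23 M2) x (mat_neg z) \<le> Lmat L12 x (mat_neg y) + Lmat L23 y (mat_neg z)"
  proof (rule Lmat_le)
    fix i j
    have "comp_seminorm L12 L23 M2 (x i j, mat_neg z i j)
        \<le> L12 (x i j, mat_neg y i j) + L23 (y i j, mat_neg z i j)"
      using comp_seminorm_le[OF M1 M2 M3 L12 L23] x y z op_subspace_neg[OF M3]
      unfolding XM_def mat_neg_def by blast
    also have "\<dots> \<le> Lmat L12 x (mat_neg y) + Lmat L23 y (mat_neg z)"
      by (intro add_mono Lmat_ge)
    finally show "comp_seminorm L12 L23 M2 (x i j, mat_neg z i j)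
        \<le> Lmat L12 x (mat_neg y) + Lmat L23 y (mat_neg z)" .
  qed
next
  fix x y assume "x \<in> XM M1" "y \<in> XM M2"
  then show "0 \<le> Lmat L12 x (mat_neg y)" by (rule Lmat_nonneg[OF L12 M1 M2])
next
  fix y z assume "y \<in> XM M2" "z \<in> XM M3"
  then show "0 \<le> Lmat L23 y (mat_neg z)" by (rule Lmat_nonneg[OF L23 M2 M3])
qed (simp_all add: XM_nonempty M1 M2 M3)

theorem mainTheorem5:
  fixes M1 :: "('a::hs_hilbert \<Rightarrow> 'a) set" and L1 :: "('a \<Rightarrow> 'a) \<Rightarrow> real"
    and M2 :: "('b::hs_hilbert \<Rightarrow> 'b) set" and L2 :: "('b \<Rightarrow> 'b) \<Rightarrow> real"
    and M3 :: "('c::hs_hilbert \<Rightarrow> 'c) set" and L3 :: "('c \<Rightarrow> 'c) \<Rightarrow> real"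
  assumes "LvNA M1 L1" and "LvNA M2 L2" and "LvNA M3 L3"
  shows "dist_qGH M1 L1 M3 L3 \<le> dist_qGH M1 L1 M2 L2 + dist_qGH M2 L2 M3 L3"
proof -
  have M1: "op_subspace M1" and M2: "op_subspace M2" and M3: "op_subspace M3"
    using assms by (simp_all add: LvNA_def von_neumann_algebra_op_subspace)
  show ?thesis
    unfolding dist_qGH_def
  proof (rule le_INF_add_INF_ereal)
    fix L12 L23 assume L12: "L12 \<in> Lset M1 L1 M2 L2" and L23: "L23 \<in> Lset M2 L2 M3 L3"
    have "(INF L\<in>Lset M1 L1 M3 L3. distH L M1 M3) \<le> distH (comp_seminorm L12 L23 M2) M1 M3"
      using comp_seminorm_Lset[OF M1 M2 M3 L12 L23] by (rule INF_lower)
    also have "\<dots> \<le> distH L12 M1 M2 + distH L23 M2 M3"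
      using M1 M2 M3 L12 L23 by (rule distH_comp_seminorm_le)
    finally show "(INF L\<in>Lset M1 L1 M3 L3. distH L M1 M3) \<le> distH L12 M1 M2 + distH L23 M2 M3" .
  next
    fix L assume "L \<in> Lset M1 L1 M2 L2"
    then show "0 \<le> distH L M1 M2" using M1 M2 by (rule distH_nonneg)
  next
    fix L assume "L \<in> Lset M2 L2 M3 L3"
    then show "0 \<le> distH L M2 M3" using M2 M3 by (rule distH_nonneg)
  qed
qed

end
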